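(* Let $\underline{V}=(v_1,\dots,v_n)$ be a random signal whose entries are independent, each $v_i$ being equal to $0$ with probability $1-\alpha$ and drawn from a distribution $f$ with probability $\alpha$. Let $\mathcal{K}=\{v_i : v_i\neq 0\}$ be the support set. Consider a bipartite graph with variable nodes $v_1,\dots,v_n$ and check nodes, in which each edge between $v_i$ and check node $c_j$ carries a weight $w_{ij}$, the weights being drawn i.i.d. from a distribution $g$ independently of the signal. The value of check node $c_j$ is $c_j=\sum_{i:\, v_i\in\mathcal{M}(c_j)} w_{ij}v_i$, where $\mathcal{M}(c)$ denotes the set of variable nodes adjacent to $c$. Suppose at least one of $f$ or $g$ is a continuous distribution. Let $c_i$ and $c_j$ be two distinct check nodes and let $\mathcal{V}_i=\mathcal{M}(c_i)\cap\mathcal{K}$ and $\mathcal{V}_j=\mathcal{M}(c_j)\cap\mathcal{K}$. Then: if $c_i=0$, then $\mathcal{V}_i=\emptyset$ with probability one; and if $\mathcal{V}_i\neq\mathcal{V}_j$, then $\Pr(c_i=c_j)=0$.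
   Context: This is the compressed sensing measurement model $\underline{C}=\underline{V}\mathbf{G}$, where the sensing matrix $\mathbf{G}$ is the weighted incidence matrix of the bipartite graph (entry in row $i$, column $j$ equals $w_{ij}$ if $v_i$ and $c_j$ are adjacent and $0$ otherwise). Variable nodes correspond to signal entries and check nodes to measurements. *)

theory Defs
  imports "HOL-Probability.Probability"
begin

text \<open>Variable nodes are indexed by i < n, check nodes by j < m.
  adj i j means variable node v_i is adjacent to check node c_j.\<close>

definition nbrs :: "nat \<Rightarrow> (nat \<Rightarrow> nat \<Rightarrow> bool) \<Rightarrow> nat \<Rightarrow> nat set" where
  "nbrs n adj j = {i. i < n \<and> adj i j}"

definition check_val ::
  "nat \<Rightarrow> (nat \<Rightarrow> nat \<Rightarrow> bool) \<Rightarrow> (nat \<Rightarrow> nat \<Rightarrow> 'a \<Rightarrow> real) \<Rightarrow> (nat \<Rightarrow> 'a \<Rightarrow> real)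
     \<Rightarrow> nat \<Rightarrow> 'a \<Rightarrow> real" where
  "check_val n adj w v j \<omega> = (\<Sum>i\<in>nbrs n adj j. w i j \<omega> * v i \<omega>)"

definition support_set :: "nat \<Rightarrow> (nat \<Rightarrow> 'a \<Rightarrow> real) \<Rightarrow> 'a \<Rightarrow> nat set" where
  "support_set n v \<omega> = {i. i < n \<and> v i \<omega> \<noteq> 0}"

definition continuous_distr :: "real measure \<Rightarrow> bool" where
  "continuous_distr \<mu> \<longleftrightarrow> (\<forall>x. measure \<mu> {x} = 0)"

definition sig_weights :: "(nat \<Rightarrow> 'a \<Rightarrow> real) \<Rightarrow> (nat \<Rightarrow> nat \<Rightarrow> 'a \<Rightarrow> real)
     \<Rightarrow> nat + nat \<times> nat \<Rightarrow> 'a \<Rightarrow> real" where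
  "sig_weights v w k = (case k of Inl i \<Rightarrow> v i | Inr (i, j) \<Rightarrow> w i j)"

end

theory Submission
  imports Defs
begin

text \<open>A check value is w_ic v_i + R, where R is a measurable function of variables independent
  of the pair (v_i, w_ic). Given all other variables, the event that w_ic v_i cancels R with
  v_i \<noteq> 0 forces the atomless factor of the product to take one prescribed nonzero value, which
  by independence and Fubini has probability zero. As the weights are almost surely nonzero,
  c_a = 0 then forces every v_i adjacent to c_a to vanish, and c_a = c_b forces every v_i
  adjacent to exactly one of the two checks to vanish.\<close>

lemma finite_nbrs [simp]: "finite (nbrs n adj j)"
  unfolding nbrs_def by simp

lemma sig_weights_Inl [simp]: "sig_weights v w (Inl i) = v i"
  and sig_weights_Inr [simp]: "sig_weights v w (Inr (i, j)) = w i j"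
  by (simp_all add: sig_weights_def)

text \<open>The real variable is given as \<phi> \<circ> X because indep_var requires both variables to
  take values in the same type.\<close>

lemma (in prob_space) indep_var_AE_eq_fun_imp_zero:
  fixes Y X :: "'a \<Rightarrow> 'b" and h \<phi> :: "'b \<Rightarrow> real"
  assumes ind: "indep_var N Y P X"
    and h[measurable]: "h \<in> borel_measurable N" and \<phi>[measurable]: "\<phi> \<in> borel_measurable P"
    and atomless: "\<And>x. x \<noteq> 0 \<Longrightarrow> \<P>(\<omega> in M. \<phi> (X \<omega>) = x) = 0"
  shows "AE \<omega> in M. \<phi> (X \<omega>) = h (Y \<omega>) \<longrightarrow> \<phi> (X \<omega>) = 0"
proof -
  have Y[measurable]: "Y \<in> measurable M N" and X[measurable]: "X \<in> measurable M P"
    using ind by (blast dest: indep_var_rv1 indep_var_rv2)+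
  interpret PY: prob_space "distr M N Y" by (rule prob_space_distr) simp
  interpret PX: prob_space "distr M P X" by (rule prob_space_distr) simp
  interpret pair_sigma_finite "distr M N Y" "distr M P X" ..
  have "AE y in distr M N Y. AE x in distr M P X. \<phi> x = h y \<longrightarrow> \<phi> x = 0"
  proof (rule AE_I2)
    fix y
    show "AE x in distr M P X. \<phi> x = h y \<longrightarrow> \<phi> x = 0"
    proof (cases "h y = 0")
      case False
      then have "AE \<omega> in M. \<phi> (X \<omega>) \<noteq> h y"
        using atomless by (subst prob_Collect_eq_0[symmetric]) auto
      then have "AE \<omega> in M. \<phi> (X \<omega>) = h y \<longrightarrow> \<phi> (X \<omega>) = 0"
        by (rule eventually_mono) simp
      then show ?thesis by (subst AE_distr_iff) simp_all
    qed simp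
  qed
  then have AE_prod: "AE p in distr M N Y \<Otimes>\<^sub>M distr M P X. \<phi> (snd p) = h (fst p) \<longrightarrow> \<phi> (snd p) = 0"
    by (subst (asm) AE_pair_iff) measurable
  have joint: "distr M N Y \<Otimes>\<^sub>M distr M P X = distr M (N \<Otimes>\<^sub>M P) (\<lambda>\<omega>. (Y \<omega>, X \<omega>))"
    using ind indep_var_distribution_eq by blast
  have "AE p in distr M (N \<Otimes>\<^sub>M P) (\<lambda>\<omega>. (Y \<omega>, X \<omega>)). \<phi> (snd p) = h (fst p) \<longrightarrow> \<phi> (snd p) = 0"
    using AE_prod unfolding joint .
  then show ?thesis by (subst (asm) AE_distr_iff) simp_all
qed

lemma (in prob_space) indep_vars_AE_product_plus_eq_zero:
  fixes X :: "'i \<Rightarrow> 'a \<Rightarrow> real"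
  assumes ind: "indep_vars (\<lambda>_. borel) X I"
    and kl: "k \<in> I" "l \<in> I" "k \<noteq> l" and J: "J \<subseteq> I - {k, l}"
    and r: "r \<in> borel_measurable (PiM J (\<lambda>_. borel))"
    and atomless: "\<And>x. x \<noteq> 0 \<Longrightarrow> \<P>(\<omega> in M. X k \<omega> = x) = 0"
  shows "AE \<omega> in M. X k \<omega> * X l \<omega> + r (restrict (\<lambda>i. X i \<omega>) J) = 0 \<longrightarrow> X l \<omega> \<noteq> 0 \<longrightarrow> X k \<omega> = 0"
proof -
  define B where "B = I - {k}"
  have JB: "J \<subseteq> B" and lB: "l \<in> B" using kl J by (auto simp: B_def)
  define h where "h y = - r (restrict y J) / y l" for y :: "'i \<Rightarrow> real"
  have h: "h \<in> borel_measurable (PiM B (\<lambda>_. borel))"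
    unfolding h_def[abs_def]
    by (intro borel_measurable_divide borel_measurable_uminus measurable_component_singleton lB
        measurable_compose[OF measurable_restrict_subset[OF JB] r])
  have "indep_var (PiM B (\<lambda>_. borel)) (\<lambda>\<omega>. restrict (\<lambda>i. X i \<omega>) B)
      (PiM {k} (\<lambda>_. borel)) (\<lambda>\<omega>. restrict (\<lambda>i. X i \<omega>) {k})"
    by (rule indep_var_restrict[OF ind]) (use kl in \<open>auto simp: B_def\<close>)
  from this h have "AE \<omega> in M. restrict (\<lambda>i. X i \<omega>) {k} k = h (restrict (\<lambda>i. X i \<omega>) B)
      \<longrightarrow> restrict (\<lambda>i. X i \<omega>) {k} k = 0"
    by (rule indep_var_AE_eq_fun_imp_zero) (simp_all add: atomless)
  then have "AE \<omega> in M. X k \<omega> = h (restrict (\<lambda>i. X i \<omega>) B) \<longrightarrow> X k \<omega> = 0"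
    by simp
  then show ?thesis
  proof (rule eventually_mono, intro impI)
    fix \<omega>
    assume "X k \<omega> = h (restrict (\<lambda>i. X i \<omega>) B) \<longrightarrow> X k \<omega> = 0"
      and "X k \<omega> * X l \<omega> + r (restrict (\<lambda>i. X i \<omega>) J) = 0" and "X l \<omega> \<noteq> 0"
    moreover have "restrict (restrict (\<lambda>i. X i \<omega>) B) J = restrict (\<lambda>i. X i \<omega>) J"
      using JB by (simp add: Int_absorb1)
    ultimately show "X k \<omega> = 0"
      using lB by (auto simp: h_def field_simps)
  qed
qed

definition signal_weight_index :: "nat \<Rightarrow> nat \<Rightarrow> (nat \<Rightarrow> nat \<Rightarrow> bool) \<Rightarrow> (nat + nat \<times> nat) set" where
  "signal_weight_index n m adj = {Inl i | i. i < n} \<union> {Inr (i, j) | i j. i < n \<and> j < m \<and> adj i j}"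

locale weighted_measurement = prob_space M
  for M :: "'a measure" and n m :: nat and adj :: "nat \<Rightarrow> nat \<Rightarrow> bool"
    and v :: "nat \<Rightarrow> 'a \<Rightarrow> real" and w :: "nat \<Rightarrow> nat \<Rightarrow> 'a \<Rightarrow> real" +
  assumes indep: "indep_vars (\<lambda>_. borel) (sig_weights v w) (signal_weight_index n m adj)"
    and weight_nonzero: "\<And>i j. i < n \<Longrightarrow> j < m \<Longrightarrow> adj i j \<Longrightarrow> AE \<omega> in M. w i j \<omega> \<noteq> 0"
    and edge_atomless: "\<And>i j. i < n \<Longrightarrow> j < m \<Longrightarrow> adj i j \<Longrightarrow>
      (\<forall>x. x \<noteq> 0 \<longrightarrow> \<P>(\<omega> in M. v i \<omega> = x) = 0) \<or> (\<forall>x. \<P>(\<omega> in M. w i j \<omega> = x) = 0)"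
begin

lemma AE_edge_term_plus_eq_zero:
  assumes edge: "i < n" "c < m" "adj i c"
    and J: "J \<subseteq> signal_weight_index n m adj - {Inl i, Inr (i, c)}"
    and r: "r \<in> borel_measurable (PiM J (\<lambda>_. borel))"
  shows "AE \<omega> in M. w i c \<omega> * v i \<omega> + r (restrict (\<lambda>k. sig_weights v w k \<omega>) J) = 0 \<longrightarrow> v i \<omega> = 0"
proof -
  have idx: "Inl i \<in> signal_weight_index n m adj" "Inr (i, c) \<in> signal_weight_index n m adj"
    using edge by (auto simp: signal_weight_index_def)
  from edge_atomless[OF edge] show ?thesis
  proof
    assume "\<forall>x. x \<noteq> 0 \<longrightarrow> \<P>(\<omega> in M. v i \<omega> = x) = 0"
    with indep_vars_AE_product_plus_eq_zero[OF indep idx _ J r]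
    have "AE \<omega> in M. v i \<omega> * w i c \<omega> + r (restrict (\<lambda>k. sig_weights v w k \<omega>) J) = 0 \<longrightarrow>
        w i c \<omega> \<noteq> 0 \<longrightarrow> v i \<omega> = 0"
      by simp
    with weight_nonzero[OF edge] show ?thesis
      by eventually_elim (simp add: mult.commute)
  next
    assume "\<forall>x. \<P>(\<omega> in M. w i c \<omega> = x) = 0"
    with indep_vars_AE_product_plus_eq_zero[OF indep idx(2,1) _ _ r] J
    have "AE \<omega> in M. w i c \<omega> * v i \<omega> + r (restrict (\<lambda>k. sig_weights v w k \<omega>) J) = 0 \<longrightarrow>
        v i \<omega> \<noteq> 0 \<longrightarrow> w i c \<omega> = 0"
      by auto
    with weight_nonzero[OF edge] show ?thesis
      by eventually_elim auto
  qed
qed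

lemma AE_check_val_eq_partial_sum_imp_zero:
  assumes i: "i \<in> nbrs n adj c" and cd: "c < m" "d < m"
    and S: "S \<subseteq> nbrs n adj d" "i \<notin> S"
  shows "AE \<omega> in M. check_val n adj w v c \<omega> = (\<Sum>k\<in>S. w k d \<omega> * v k \<omega>) \<longrightarrow> v i \<omega> = 0"
proof -
  have edge: "i < n" "adj i c" using i by (auto simp: nbrs_def)
  define C where "C = nbrs n adj c - {i}"
  define J where "J = Inl ` (C \<union> S) \<union> (\<lambda>k. Inr (k, c)) ` C \<union> (\<lambda>k. Inr (k, d)) ` S"
  define r where "r y = (\<Sum>k\<in>C. y (Inr (k, c)) * y (Inl k)) - (\<Sum>k\<in>S. y (Inr (k, d)) * y (Inl k))"
    for y :: "nat + nat \<times> nat \<Rightarrow> real"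
  have J_sub: "J \<subseteq> signal_weight_index n m adj - {Inl i, Inr (i, c)}"
    using S cd unfolding J_def C_def signal_weight_index_def by (auto simp: nbrs_def)
  have r: "r \<in> borel_measurable (PiM J (\<lambda>_. borel))"
    unfolding r_def[abs_def] J_def
    by (intro borel_measurable_diff borel_measurable_sum borel_measurable_times
        measurable_component_singleton) auto
  have split: "check_val n adj w v c \<omega> - (\<Sum>k\<in>S. w k d \<omega> * v k \<omega>)
      = w i c \<omega> * v i \<omega> + r (restrict (\<lambda>k. sig_weights v w k \<omega>) J)" for \<omega>
  proof -
    have "check_val n adj w v c \<omega> = w i c \<omega> * v i \<omega> + (\<Sum>k\<in>C. w k c \<omega> * v k \<omega>)"
      unfolding check_val_def C_def using i by (simp add: sum.remove)
    moreover have "r (restrict (\<lambda>k. sig_weights v w k \<omega>) J)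
        = (\<Sum>k\<in>C. w k c \<omega> * v k \<omega>) - (\<Sum>k\<in>S. w k d \<omega> * v k \<omega>)"
      unfolding r_def by (intro arg_cong2[where f = "(-)"] sum.cong) (auto simp: J_def)
    ultimately show ?thesis by simp
  qed
  from AE_edge_term_plus_eq_zero[OF edge(1) cd(1) edge(2) J_sub r] show ?thesis
    by eventually_elim (simp flip: split)
qed

lemma AE_check_val_zero_imp_no_support:
  assumes "c < m"
  shows "AE \<omega> in M. check_val n adj w v c \<omega> = 0 \<longrightarrow> nbrs n adj c \<inter> support_set n v \<omega> = {}"
proof -
  have "AE \<omega> in M. \<forall>i\<in>nbrs n adj c. check_val n adj w v c \<omega> = 0 \<longrightarrow> v i \<omega> = 0"
    using AE_check_val_eq_partial_sum_imp_zero[of _ c c "{}"] assms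
    by (intro AE_finite_allI) simp_all
  then show ?thesis
    by eventually_elim (auto simp: support_set_def)
qed

lemma AE_check_val_eq_imp_same_support:
  assumes "a < m" "b < m"
  shows "AE \<omega> in M. check_val n adj w v a \<omega> = check_val n adj w v b \<omega> \<longrightarrow>
      nbrs n adj a \<inter> support_set n v \<omega> = nbrs n adj b \<inter> support_set n v \<omega>"
proof -
  have one_side: "AE \<omega> in M. \<forall>i\<in>nbrs n adj c - nbrs n adj d.
      check_val n adj w v c \<omega> = check_val n adj w v d \<omega> \<longrightarrow> v i \<omega> = 0"
    if "c < m" "d < m" for c d
    using AE_check_val_eq_partial_sum_imp_zero[of _ c d "nbrs n adj d"] that
    by (intro AE_finite_allI) (auto simp: check_val_def)
  from one_side[OF assms] one_side[OF assms(2,1)] show ?thesis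
    by eventually_elim (auto simp: support_set_def)
qed

end

theorem theorem1:
  fixes M :: "'a measure"
    and n m :: nat
    and adj :: "nat \<Rightarrow> nat \<Rightarrow> bool"
    and v :: "nat \<Rightarrow> 'a \<Rightarrow> real"
    and w :: "nat \<Rightarrow> nat \<Rightarrow> 'a \<Rightarrow> real"
    and \<alpha> :: real
    and f g :: "real measure"
    and a b :: nat
  assumes M: "prob_space M"
    and alpha: "0 \<le> \<alpha>" "\<alpha> \<le> 1"
    and f: "prob_space f" "sets f = sets borel"
    and g: "prob_space g" "sets g = sets borel"
    and g_nonzero: "measure g {0} = 0"
    and v_meas: "\<And>i. i < n \<Longrightarrow> v i \<in> borel_measurable M"
    and w_meas: "\<And>i j. i < n \<Longrightarrow> j < m \<Longrightarrow> adj i j \<Longrightarrow> w i j \<in> borel_measurable M"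
    and v_distr: "\<And>i A. i < n \<Longrightarrow> A \<in> sets borel \<Longrightarrow>
        measure M (v i -` A \<inter> space M) = (1 - \<alpha>) * indicator A 0 + \<alpha> * measure f A"
    and w_distr: "\<And>i j. i < n \<Longrightarrow> j < m \<Longrightarrow> adj i j \<Longrightarrow> distr M borel (w i j) = g"
    and indep: "prob_space.indep_vars M (\<lambda>_. borel) (sig_weights v w)
        ({Inl i | i. i < n} \<union> {Inr (i, j) | i j. i < n \<and> j < m \<and> adj i j})"
    and cont: "continuous_distr f \<or> continuous_distr g"
    and ab: "a < m" "b < m" "a \<noteq> b"
  shows "(AE \<omega> in M. check_val n adj w v a \<omega> = 0 \<longrightarrow>
            nbrs n adj a \<inter> support_set n v \<omega> = {})
       \<and> measure M {\<omega> \<in> space M. check_val n adj w v a \<omega> = check_val n adj w v b \<omega> \<and>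
            nbrs n adj a \<inter> support_set n v \<omega> \<noteq> nbrs n adj b \<inter> support_set n v \<omega>} = 0"
proof -
  interpret prob_space M by (rule M)
  have point_w: "\<P>(\<omega> in M. w i j \<omega> = x) = measure g {x}" if "i < n" "j < m" "adj i j" for i j x
  proof -
    have "\<P>(\<omega> in M. w i j \<omega> = x) = measure (distr M borel (w i j)) {x}"
      using w_meas[OF that] by (simp add: measure_distr vimage_def Int_def conj_commute)
    then show ?thesis using w_distr[OF that] by simp
  qed
  have point_v: "\<P>(\<omega> in M. v i \<omega> = x) = \<alpha> * measure f {x}" if "i < n" "x \<noteq> 0" for i x
    using v_distr[OF that(1), of "{x}"] that(2) by (simp add: vimage_def Int_def conj_commute)
  interpret weighted_measurement M n m adj v w
  proof
    show "indep_vars (\<lambda>_. borel) (sig_weights v w) (signal_weight_index n m adj)"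
      using indep by (simp add: signal_weight_index_def)
  next
    fix i j assume edge: "i < n" "j < m" "adj i j"
    have "{\<omega> \<in> space M. w i j \<omega> = 0} \<in> sets M"
      using w_meas[OF edge] by measurable
    then show "AE \<omega> in M. w i j \<omega> \<noteq> 0"
      using point_w[OF edge] g_nonzero by (simp flip: prob_Collect_eq_0)
    show "(\<forall>x. x \<noteq> 0 \<longrightarrow> \<P>(\<omega> in M. v i \<omega> = x) = 0) \<or> (\<forall>x. \<P>(\<omega> in M. w i j \<omega> = x) = 0)"
      using cont point_v[OF edge(1)] point_w[OF edge] by (auto simp: continuous_distr_def)
  qed
  show ?thesis
    using AE_check_val_zero_imp_no_support[OF ab(1)] AE_check_val_eq_imp_same_support[OF ab(1,2)]
    by (auto intro: prob_eq_0_AE)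
qed

end
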